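(* For any sequence $\{z_k\}_{k\ge1}$ of complex numbers, for Lebesgue-almost every $r\in(0,\infty)$ we have $\liminf_{n\to\infty}\left(\inf_{|z|=r}|z-z_n|\right)^{1/n}\ge1$. *)

theory Defs
  imports "HOL-Analysis.Analysis"
begin

end

theory Submission
  imports Defs
begin

text \<open>The distance from \<open>z\<^sub>n\<close> to the circle of radius \<open>r\<close> is at least \<open>\<bar>r - \<bar>z\<^sub>n\<bar>\<bar>\<close>.
  For \<open>0 < c < 1\<close> the radii with \<open>\<bar>r - \<bar>z\<^sub>n\<bar>\<bar> < c\<^sup>n\<close> form an interval of length \<open>2 c\<^sup>n\<close>;
  these lengths are summable, so by Borel--Cantelli almost every \<open>r\<close> eventually avoids
  them, and taking \<open>n\<close>-th roots gives a lower limit of at least \<open>c\<close>. Letting \<open>c \<rightarrow> 1\<close>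
  along a countable sequence yields the bound \<open>1\<close> almost everywhere.\<close>

lemma abs_diff_norm_le_INF_sphere:
  fixes z :: "'a::{real_normed_vector, perfect_space}"
  assumes "r \<ge> 0"
  shows "\<bar>r - norm z\<bar> \<le> (INF w\<in>sphere 0 r. norm (w - z))"
proof (rule cINF_greatest)
  show "sphere (0::'a) r \<noteq> {}"
    using assms by simp
  fix w assume "w \<in> sphere (0::'a) r"
  then have "norm w = r" by simp
  then show "\<bar>r - norm z\<bar> \<le> norm (w - z)"
    using norm_triangle_ineq3[of w z] by simp
qed

lemma AE_eventually_geometric_le_dist:
  fixes a :: "nat \<Rightarrow> real" and c :: real
  assumes "0 < c" "c < 1"
  shows "AE r in lborel. eventually (\<lambda>n. c ^ n \<le> \<bar>r - a n\<bar>) sequentially"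
proof -
  define A where "A n = {a n - c ^ n <..< a n + c ^ n}" for n
  have measure_A: "measure lborel (A n) = 2 * c ^ n" for n
    unfolding A_def using assms by (subst measure_lborel_Ioo) auto
  have "AE r in lborel. eventually (\<lambda>n. r \<in> space lborel - A n) sequentially"
  proof (rule borel_cantelli_AE1)
    show "A n \<in> sets lborel" for n
      unfolding A_def by simp
    show "emeasure lborel (A n) < \<infinity>" for n
      unfolding A_def using assms by (subst emeasure_lborel_Ioo) auto
    show "summable (\<lambda>n. measure lborel (A n))"
      unfolding measure_A using assms by (intro summable_mult summable_geometric) auto
  qed
  then show ?thesis
    by eventually_elim (auto simp: A_def elim!: eventually_mono)
qed

lemma Liminf_root_ge:
  fixes d :: "nat \<Rightarrow> real" and c :: real
  assumes "0 < c" and "eventually (\<lambda>n. c ^ n \<le> d n) sequentially"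
  shows "ereal c \<le> Liminf sequentially (\<lambda>n. ereal (d n powr (1 / real n)))"
proof (rule Liminf_bounded)
  show "eventually (\<lambda>n. ereal c \<le> ereal (d n powr (1 / real n))) sequentially"
    using assms(2) eventually_gt_at_top[of 0]
  proof eventually_elim
    case (elim n)
    have "c = (c ^ n) powr (1 / real n)"
      using assms(1) elim by (simp add: powr_realpow[symmetric] powr_powr)
    also have "\<dots> \<le> d n powr (1 / real n)"
      using elim assms(1) by (intro powr_mono2) auto
    finally show ?case by simp
  qed
qed

lemma one_le_if_approx_le:
  fixes L :: ereal
  assumes "\<And>m::nat. ereal (1 - 1 / (real m + 2)) \<le> L"
  shows "1 \<le> L"
proof -
  have "(\<lambda>m. inverse (real (Suc (Suc m)))) \<longlonglongrightarrow> 0"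
    by (rule LIMSEQ_Suc[OF LIMSEQ_inverse_real_of_nat])
  then have "(\<lambda>m::nat. 1 - 1 / (real m + 2)) \<longlonglongrightarrow> 1 - 0"
    by (intro tendsto_diff tendsto_const) (simp add: divide_inverse add.commute)
  then have "(\<lambda>m::nat. ereal (1 - 1 / (real m + 2))) \<longlonglongrightarrow> ereal 1"
    by (intro tendsto_ereal) simp
  then have "ereal 1 \<le> L"
    by (rule LIMSEQ_le_const2) (use assms in auto)
  then show ?thesis
    by (simp add: one_ereal_def)
qed

theorem mainTheorem10:
  fixes z :: "nat \<Rightarrow> complex"
  shows "AE r in lborel. r > 0 \<longrightarrow>
           Liminf sequentially
             (\<lambda>n. ereal ((INF w\<in>sphere 0 r. cmod (w - z n)) powr (1 / real n))) \<ge> 1"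
proof -
  let ?c = "\<lambda>m::nat. 1 - 1 / (real m + 2)"
  have "AE r in lborel. \<forall>m. eventually (\<lambda>n. ?c m ^ n \<le> \<bar>r - cmod (z n)\<bar>) sequentially"
    unfolding AE_all_countable
    by (intro allI AE_eventually_geometric_le_dist) (auto simp: field_simps)
  then show ?thesis
  proof (rule AE_mp, intro AE_I2 impI)
    fix r :: real
    assume far: "\<forall>m. eventually (\<lambda>n. ?c m ^ n \<le> \<bar>r - cmod (z n)\<bar>) sequentially"
      and "r > 0"
    have "eventually (\<lambda>n. ?c m ^ n \<le> (INF w\<in>sphere 0 r. cmod (w - z n))) sequentially" for m
      using far[rule_format, of m]
    proof eventually_elim
      case (elim n)
      then show ?case
        using abs_diff_norm_le_INF_sphere[of r "z n"] \<open>r > 0\<close> by linarith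
    qed
    then show "1 \<le> Liminf sequentially
             (\<lambda>n. ereal ((INF w\<in>sphere 0 r. cmod (w - z n)) powr (1 / real n)))"
      by (intro one_le_if_approx_le Liminf_root_ge) (auto simp: field_simps)
  qed
qed

end
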